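(* Let $n\ge2$ and let $A=(a_{ij})_{i,j=1}^n:\mathbb{R}^n\to\mathbb{M}_n$ be a matrix-valued function with Lipschitz continuous coefficients for which there exist $\lambda,\eta>0$ such that: (i) $a_{ij}(x)=a_{ji}(x)$ for every $x$ and all $i,j$; (ii) $a_{ij}(x)\xi_i\zeta_j\le\lambda^{-1}|\xi||\zeta|$ for every $x,\xi,\zeta\in\mathbb{R}^n$; (iii) $a_{ij}(x)\xi_i\xi_j\ge\lambda|\xi|^2$ for every $x,\xi\in\mathbb{R}^n$; (iv) $|\nabla a_{ij}(x)|\le\eta$ for a.e. $x$ and all $i,j$. Define $\mu:\mathbb{R}^n\setminus\{0\}\to[\lambda,\lambda^{-1}]$ and $Z:\mathbb{R}^n\setminus\{0\}\to\mathbb{R}^n$ by $$\mu(x) = \frac{A(x)x\cdot x}{|x|^2},\qquad Z(x) = \frac{A(x)x}{\mu(x)}.$$ If $A(0)=I$, then there exist constants $c_1,c_2,c_3>0$, depending only on $n$ and $\lambda$, such that for every $r>0$ and a.e. $x\in B_r$, $$\left|\operatorname{div}[A(x)x]\,\mu(x)^{-1} - n\right|\le c_1\eta r,\qquad \left|\delta_{ik}-\partial_i Z_k(x)\right|\le c_2\eta r \ \text{ for all } i,k,\qquad |\operatorname{div}Z(x) - n|\le c_3\eta r.$$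
   Context: Summation over repeated indices is used; $\delta_{ik}$ is the Kronecker delta; $B_r$ is the open ball of radius $r$ centered at the origin. *)

theory Defs
  imports "HOL-Analysis.Analysis"
begin

definition vpartial :: "(real^'n \<Rightarrow> real^'n) \<Rightarrow> 'n \<Rightarrow> 'n \<Rightarrow> real^'n \<Rightarrow> real" where
  "vpartial F i k x = (frechet_derivative F (at x) (axis i 1)) $ k"

definition divergence :: "(real^'n \<Rightarrow> real^'n) \<Rightarrow> real^'n \<Rightarrow> real" where
  "divergence F x = (\<Sum>i\<in>UNIV. vpartial F i i x)"

definition mu_fun :: "(real^'n \<Rightarrow> real^'n^'n) \<Rightarrow> real^'n \<Rightarrow> real" where
  "mu_fun A x = ((A x *v x) \<bullet> x) / (norm x)^2"

definition Z_fun :: "(real^'n \<Rightarrow> real^'n^'n) \<Rightarrow> real^'n \<Rightarrow> real^'n" where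
  "Z_fun A x = (1 / mu_fun A x) *\<^sub>R (A x *v x)"

end

theory Submission
  imports Defs
begin

(* Each coefficient a_ij is Lipschitz with gradient bounded by eta almost everywhere, hence it is
   eta-Lipschitz. The almost-everywhere information suffices after averaging over a small cube:
   along the segment from y to x the difference quotients of a_ij converge a.e. to directional
   derivatives of size at most eta |x - y| and are dominated by the Lipschitz constant, so the
   cube averages at x and at y differ by at most eta |x - y| times the volume. With A(0) = I this
   gives |a_ij(x) - delta_ij| <= eta |x|.

   At a point x /= 0 where all a_ij are differentiable, the derivatives of A(y)y, mu and
   Z = A(y)y / mu are explicit. Each deviation from the values for A = I carries a factor
   A(x) - I = O(eta |x|) or a derivative of A = O(eta), while ellipticity keeps mu >= lam and
   |A(x)x| <= |x| / lam; hence all deviations are O(eta |x|) with constants depending only on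
   n and lam. *)

section \<open>Lipschitz bound from an almost-everywhere derivative bound\<close>

lemma LIMSEQ_difference_quotient:
  fixes f :: "'a::real_normed_vector \<Rightarrow> real"
  assumes "(f has_derivative D) (at u)"
  shows "(\<lambda>m. real (Suc m) * (f (u + (1 / real (Suc m)) *\<^sub>R v) - f u)) \<longlonglongrightarrow> D v"
proof -
  have "((\<lambda>t. u + t *\<^sub>R v) has_derivative (\<lambda>t. t *\<^sub>R v)) (at 0)"
    by (auto intro!: derivative_eq_intros)
  moreover have "(f has_derivative D) (at ((\<lambda>t. u + t *\<^sub>R v) 0))"
    using assms by simp
  ultimately have "((\<lambda>t. f (u + t *\<^sub>R v)) has_derivative (\<lambda>t. D (t *\<^sub>R v))) (at 0)"
    by (rule has_derivative_compose)
  moreover have "linear D"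
    using assms has_derivative_linear by blast
  then have "(\<lambda>t. D (t *\<^sub>R v)) = (*) (D v)"
    by (auto simp: linear_scale)
  ultimately have "((\<lambda>t. f (u + t *\<^sub>R v)) has_field_derivative D v) (at 0)"
    by (simp add: has_field_derivative_def)
  then have "((\<lambda>t. (f (u + t *\<^sub>R v) - f u) / t) \<longlongrightarrow> D v) (at 0)"
    by (simp add: has_field_derivative_iff)
  moreover have "(\<lambda>m. 1 / real (Suc m)) \<longlonglongrightarrow> 0"
    using LIMSEQ_inverse_real_of_nat by (simp add: inverse_eq_divide)
  ultimately have "((\<lambda>t. (f (u + t *\<^sub>R v) - f u) / t) \<circ> (\<lambda>m. 1 / real (Suc m))) \<longlonglongrightarrow> D v"
    unfolding tendsto_at_iff_sequentially by auto
  then show ?thesis by (simp add: o_def mult.commute)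
qed

lemma norm_le_DIM_mult_if_mem_cube:
  fixes z :: "'a::euclidean_space"
  assumes "z \<in> cbox (- (\<rho> *\<^sub>R One)) (\<rho> *\<^sub>R One)"
  shows "norm z \<le> real DIM('a) * \<rho>"
proof -
  have "(\<Sum>i\<in>Basis. \<bar>z \<bullet> i\<bar>) \<le> (\<Sum>i\<in>(Basis::'a set). \<rho>)"
    using assms by (intro sum_mono) (auto simp: mem_box abs_le_iff)
  then show ?thesis using norm_le_l1[of z] by simp
qed

lemma abs_integral_shift_sub_content_mult_le:
  fixes f :: "'a::euclidean_space \<Rightarrow> real"
  assumes lip: "L-lipschitz_on UNIV f" and bound: "\<And>z. z \<in> cbox a b \<Longrightarrow> norm z \<le> d"
  shows "\<bar>integral (cbox a b) (\<lambda>z. f (c + z)) - measure lborel (cbox a b) * f c\<bar>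
           \<le> L * d * measure lborel (cbox a b)"
proof (cases "cbox a b = {}")
  case False
  then obtain z where "z \<in> cbox a b" by blast
  have "0 \<le> L * d"
    using mult_nonneg_nonneg[OF lipschitz_on_nonneg[OF lip]
        order_trans[OF norm_ge_zero bound[OF \<open>z \<in> cbox a b\<close>]]] .
  have shifted: "(\<lambda>z. f (c + z)) integrable_on cbox a b"
    by (intro integrable_continuous continuous_on_compose2[OF lipschitz_on_continuous_on[OF lip]]
        continuous_intros) auto
  have "\<bar>f (c + z) - f c\<bar> \<le> L * d" if "z \<in> cbox a b" for z
  proof -
    have "\<bar>f (c + z) - f c\<bar> \<le> L * norm z"
      using lipschitz_on_normD[OF lip, of "c + z" c] by simp
    also have "\<dots> \<le> L * d"
      using bound[OF that] lipschitz_on_nonneg[OF lip] by (rule mult_left_mono)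
    finally show ?thesis .
  qed
  then have "norm (integral (cbox a b) (\<lambda>z. f (c + z) - f c)) \<le> L * d * measure lborel (cbox a b)"
    using has_integral_bound[OF \<open>0 \<le> L * d\<close>
        integrable_integral[OF integrable_diff[OF shifted integrable_const]]]
    by simp
  then show ?thesis
    using integral_diff[OF shifted integrable_const] by simp
qed simp

lemma integral_shift_increment_le:
  fixes f :: "'a::euclidean_space \<Rightarrow> real"
  assumes cont: "continuous_on UNIV f"
    and box: "cbox (a + c) (b + c) \<subseteq> cbox p q" and "0 < s"
  shows "integral (cbox a b) (\<lambda>z. f (c + w + z)) - integral (cbox a b) (\<lambda>z. f (c + z))
    \<le> (\<beta> * measure lborel (cbox a b) + integral (cbox p q) (\<lambda>u. max 0 (s * (f (u + w) - f u) - \<beta>))) / s"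
proof -
  define G where "G = (\<lambda>u. s * (f (u + w) - f u))"
  define H where "H = (\<lambda>u. max 0 (G u - \<beta>))"
  have contG: "continuous_on UNIV G"
    unfolding G_def by (intro continuous_intros continuous_on_compose2[OF cont]) auto
  have contH: "continuous_on UNIV H"
    unfolding H_def by (intro continuous_intros contG)
  have shift_integrable: "(\<lambda>z. g (c + z)) integrable_on cbox a b"
    if "continuous_on UNIV g" for g :: "'a \<Rightarrow> real" and c
    by (intro integrable_continuous continuous_on_compose2[OF that] continuous_intros) auto
  have "integral (cbox a b) (\<lambda>z. f (c + w + z)) - integral (cbox a b) (\<lambda>z. f (c + z))
      = integral (cbox a b) (\<lambda>z. f (c + z + w) - f (c + z))"
    using shift_integrable[OF cont, of "c + w"] shift_integrable[OF cont, of c]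
    by (subst integral_diff[symmetric]) (auto simp: ac_simps)
  also have "\<dots> = integral (cbox a b) (\<lambda>z. G (c + z)) / s"
    using \<open>0 < s\<close> by (simp add: G_def)
  also have "integral (cbox a b) (\<lambda>z. G (c + z)) \<le> integral (cbox a b) (\<lambda>z. \<beta> + H (c + z))"
    by (intro integral_le shift_integrable contG integrable_add integrable_const contH)
      (auto simp: H_def)
  also have "\<dots> = \<beta> * measure lborel (cbox a b) + integral (cbox (a + c) (b + c)) H"
    using integral_shift_cbox_plus[of a b H c] shift_integrable[OF contH, of c]
    by (simp add: integral_add[OF integrable_const] o_def mult.commute)
  also have "integral (cbox (a + c) (b + c)) H \<le> integral (cbox p q) H"
    using box contH
    by (intro integral_subset_le integrable_continuous) (auto simp: H_def intro: continuous_on_subset)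
  finally show ?thesis
    using \<open>0 < s\<close> by (simp add: H_def G_def divide_right_mono)
qed

lemma integral_shift_diff_le_difference_quotient:
  fixes f :: "'a::euclidean_space \<Rightarrow> real" and m :: nat
  assumes cont: "continuous_on UNIV f"
    and boxes: "\<And>c. c \<in> closed_segment y x \<Longrightarrow> cbox (a + c) (b + c) \<subseteq> cbox p q"
  shows "integral (cbox a b) (\<lambda>z. f (x + z)) - integral (cbox a b) (\<lambda>z. f (y + z))
    \<le> \<beta> * measure lborel (cbox a b)
       + integral (cbox p q) (\<lambda>u. max 0 (real (Suc m) * (f (u + (1 / real (Suc m)) *\<^sub>R (x - y)) - f u) - \<beta>))"
    (is "?I x - ?I y \<le> ?B")
proof -
  define c where "c k = y + (real k / real (Suc m)) *\<^sub>R (x - y)" for k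
  have c_step: "c (Suc k) = c k + (1 / real (Suc m)) *\<^sub>R (x - y)" for k
    by (simp add: c_def add_divide_distrib scaleR_add_left)
  have c_segment: "c k \<in> closed_segment y x" if "k \<le> Suc m" for k
    unfolding in_segment c_def using that
    by (intro exI[of _ "real k / real (Suc m)"]) (auto simp: algebra_simps)
  have "?I x - ?I y = (\<Sum>k<Suc m. ?I (c (Suc k)) - ?I (c k))"
    by (subst sum_lessThan_telescope) (simp add: c_def)
  also have "\<dots> \<le> (\<Sum>k<Suc m. ?B / real (Suc m))"
    using integral_shift_increment_le[OF cont boxes[OF c_segment]]
    by (intro sum_mono) (simp add: c_step)
  finally show ?thesis by simp
qed

lemma abs_difference_quotient_le:
  fixes f :: "'a::real_normed_vector \<Rightarrow> real"
  assumes lip: "L-lipschitz_on UNIV f" and "0 < s"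
  shows "\<bar>s * (f (u + (1 / s) *\<^sub>R v) - f u)\<bar> \<le> L * norm v"
proof -
  have "\<bar>f (u + (1 / s) *\<^sub>R v) - f u\<bar> \<le> L * (norm v / s)"
    using lipschitz_on_normD[OF lip, of "u + (1 / s) *\<^sub>R v" u] \<open>0 < s\<close> by simp
  then show ?thesis
    using \<open>0 < s\<close> unfolding abs_mult by (simp add: field_simps del: right_diff_distrib)
qed

lemma excess_difference_quotient_LIMSEQ_0:
  fixes f :: "'a::real_normed_vector \<Rightarrow> real"
  assumes "(f has_derivative D) (at u)" and "\<forall>h. \<bar>D h\<bar> \<le> \<eta> * norm h"
  shows "(\<lambda>m. max 0 (real (Suc m) * (f (u + (1 / real (Suc m)) *\<^sub>R v) - f u) - \<eta> * norm v))
         \<longlonglongrightarrow> 0"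
proof -
  have "(\<lambda>m. max 0 (real (Suc m) * (f (u + (1 / real (Suc m)) *\<^sub>R v) - f u) - \<eta> * norm v))
      \<longlonglongrightarrow> max 0 (D v - \<eta> * norm v)"
    by (intro tendsto_intros LIMSEQ_difference_quotient assms(1))
  moreover have "max 0 (D v - \<eta> * norm v) = 0"
    using assms(2) abs_le_D1[of "D v" "\<eta> * norm v"] by simp
  ultimately show ?thesis
    by simp
qed

lemma integral_excess_difference_quotient_LIMSEQ_0:
  fixes f :: "'a::euclidean_space \<Rightarrow> real"
  assumes lip: "L-lipschitz_on UNIV f"
    and deriv: "AE z in lebesgue. \<exists>D. (f has_derivative D) (at z) \<and> (\<forall>h. \<bar>D h\<bar> \<le> \<eta> * norm h)"
  shows "(\<lambda>m. integral (cbox p q)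
            (\<lambda>u. max 0 (real (Suc m) * (f (u + (1 / real (Suc m)) *\<^sub>R v) - f u) - \<eta> * norm v)))
         \<longlonglongrightarrow> 0"
proof -
  define H where "H = (\<lambda>m u. max 0 (real (Suc m) * (f (u + (1 / real (Suc m)) *\<^sub>R v) - f u) - \<eta> * norm v))"
  obtain N where "negligible N"
    and N: "\<And>z. z \<notin> N \<Longrightarrow> \<exists>D. (f has_derivative D) (at z) \<and> (\<forall>h. \<bar>D h\<bar> \<le> \<eta> * norm h)"
    using deriv unfolding eventually_ae_filter_negligible by blast
  \<comment> \<open>Spiking on the null set \<open>N\<close> makes the convergence hold everywhere, as
    \<open>dominated_convergence\<close> requires.\<close>
  define H' where "H' = (\<lambda>m u. if u \<in> N then 0 else H m u)"
  have "H m integrable_on cbox p q" for m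
    unfolding H_def
    by (intro integrable_continuous continuous_intros
        continuous_on_compose2[OF lipschitz_on_continuous_on[OF lip]]) auto
  then have H'_integrable: "H' m integrable_on cbox p q" for m
    unfolding H'_def by (rule integrable_spike[OF _ \<open>negligible N\<close>]) auto
  have H'_bound: "norm (H' m u) \<le> (L + \<bar>\<eta>\<bar>) * norm v" for m u
  proof -
    have "- (\<bar>\<eta>\<bar> * norm v) \<le> \<eta> * norm v"
      using abs_ge_minus_self[of "\<eta> * norm v"] by (simp add: abs_mult)
    then show ?thesis
      using abs_difference_quotient_le[OF lip, of "real (Suc m)" u v] lipschitz_on_nonneg[OF lip]
      by (auto simp: H'_def H_def algebra_simps)
  qed
  have H'_LIMSEQ: "(\<lambda>m. H' m u) \<longlonglongrightarrow> 0" for u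
    using N[of u] excess_difference_quotient_LIMSEQ_0 by (cases "u \<in> N") (auto simp: H'_def H_def)
  have "(\<lambda>m. integral (cbox p q) (H' m)) \<longlonglongrightarrow> integral (cbox p q) (\<lambda>u. 0)"
    using H'_integrable H'_bound H'_LIMSEQ
    by (intro dominated_convergence(2)[where h = "\<lambda>_. (L + \<bar>\<eta>\<bar>) * norm v"]) auto
  moreover have "integral (cbox p q) (H' m) = integral (cbox p q) (H m)" for m
    unfolding H'_def by (rule integral_spike[OF \<open>negligible N\<close>]) auto
  ultimately show ?thesis
    by (simp add: H_def)
qed

lemma integral_shift_diff_le_if_AE_derivative_bound:
  fixes f :: "'a::euclidean_space \<Rightarrow> real"
  assumes lip: "L-lipschitz_on UNIV f"
    and deriv: "AE z in lebesgue. \<exists>D. (f has_derivative D) (at z) \<and> (\<forall>h. \<bar>D h\<bar> \<le> \<eta> * norm h)"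
  shows "integral (cbox a b) (\<lambda>z. f (x + z)) - integral (cbox a b) (\<lambda>z. f (y + z))
           \<le> \<eta> * norm (x - y) * measure lborel (cbox a b)"
proof -
  have "compact {c + z |c z. c \<in> closed_segment y x \<and> z \<in> cbox a b}"
    using compact_sums[OF compact_segment compact_cbox] by blast
  then obtain R where R: "{c + z |c z. c \<in> closed_segment y x \<and> z \<in> cbox a b} \<subseteq> cbox (- R) R"
    using bounded_subset_cbox_symmetric[OF compact_imp_bounded] by blast
  have boxes: "cbox (a + c) (b + c) \<subseteq> cbox (- R) R" if "c \<in> closed_segment y x" for c
  proof -
    have "cbox (a + c) (b + c) = (\<lambda>z. c + z) ` cbox a b"
      using cbox_translation[of c a b] by (simp add: add.commute)
    then show ?thesis
      using R that by blast
  qed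
  let ?excess = "\<lambda>m. integral (cbox (- R) R)
    (\<lambda>u. max 0 (real (Suc m) * (f (u + (1 / real (Suc m)) *\<^sub>R (x - y)) - f u) - \<eta> * norm (x - y)))"
  have "?excess \<longlonglongrightarrow> 0"
    by (rule integral_excess_difference_quotient_LIMSEQ_0[OF lip deriv])
  then have "(\<lambda>m. \<eta> * norm (x - y) * measure lborel (cbox a b) + ?excess m)
          \<longlonglongrightarrow> \<eta> * norm (x - y) * measure lborel (cbox a b)"
    using tendsto_add[OF tendsto_const] by fastforce
  moreover have "integral (cbox a b) (\<lambda>z. f (x + z)) - integral (cbox a b) (\<lambda>z. f (y + z))
      \<le> \<eta> * norm (x - y) * measure lborel (cbox a b) + ?excess m" for m
    using integral_shift_diff_le_difference_quotient[where x = x and y = y and \<beta> = "\<eta> * norm (x - y)",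
        OF lipschitz_on_continuous_on[OF lip] boxes]
    by (simp add: mult.assoc)
  ultimately show ?thesis
    by (intro LIMSEQ_le_const) auto
qed

lemma le_if_le_plus_mult_pos:
  fixes a b C :: real
  assumes "0 \<le> C" and "\<And>\<rho>. \<rho> > 0 \<Longrightarrow> a \<le> b + C * \<rho>"
  shows "a \<le> b"
proof (rule field_le_epsilon)
  fix e :: real assume "e > 0"
  then have "a \<le> b + C * (e / (C + 1))"
    using assms(1) by (intro assms(2)) simp
  also have "C * (e / (C + 1)) \<le> e"
    using \<open>e > 0\<close> \<open>0 \<le> C\<close> by (simp add: field_simps)
  finally show "a \<le> b + e" by simp
qed

lemma lipschitz_on_UNIV_if_AE_derivative_bound:
  fixes f :: "'a::euclidean_space \<Rightarrow> real"
  assumes lip: "L-lipschitz_on UNIV f"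
    and deriv: "AE z in lebesgue. \<exists>D. (f has_derivative D) (at z) \<and> (\<forall>h. \<bar>D h\<bar> \<le> \<eta> * norm h)"
    and "0 \<le> \<eta>"
  shows "\<eta>-lipschitz_on UNIV f"
proof -
  have key: "f x - f y \<le> \<eta> * norm (x - y) + 2 * L * real DIM('a) * \<rho>" if "\<rho> > 0" for x y \<rho>
  proof -
    define K :: "'a set" where "K = cbox (- (\<rho> *\<^sub>R One)) (\<rho> *\<^sub>R One)"
    have "measure lborel K > 0"
      unfolding K_def using \<open>\<rho> > 0\<close> by (intro content_pos_lt) auto
    moreover have approx: "\<bar>integral K (\<lambda>z. f (c + z)) - measure lborel K * f c\<bar>
        \<le> L * (real DIM('a) * \<rho>) * measure lborel K" for c
      unfolding K_def by (intro abs_integral_shift_sub_content_mult_le lip norm_le_DIM_mult_if_mem_cube)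
    moreover have "integral K (\<lambda>z. f (x + z)) - integral K (\<lambda>z. f (y + z))
        \<le> \<eta> * norm (x - y) * measure lborel K"
      unfolding K_def by (rule integral_shift_diff_le_if_AE_derivative_bound[OF lip deriv])
    ultimately have "measure lborel K * (f x - f y)
        \<le> \<eta> * norm (x - y) * measure lborel K + 2 * (L * (real DIM('a) * \<rho>) * measure lborel K)"
      using approx[of x] approx[of y] unfolding abs_le_iff right_diff_distrib by linarith
    also have "\<dots> = measure lborel K * (\<eta> * norm (x - y) + 2 * L * real DIM('a) * \<rho>)"
      by (simp add: algebra_simps)
    finally have "measure lborel K * (f x - f y) \<le> \<dots>" .
    then show ?thesis
      using \<open>measure lborel K > 0\<close> by simp
  qed
  moreover have "0 \<le> 2 * L * real DIM('a)"
    using lipschitz_on_nonneg[OF lip] by simp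
  ultimately have one_sided: "f x - f y \<le> \<eta> * norm (x - y)" for x y
    using le_if_le_plus_mult_pos by metis
  show ?thesis
  proof (rule lipschitz_onI)
    fix x y
    show "dist (f x) (f y) \<le> \<eta> * dist x y"
      using one_sided[of x y] one_sided[of y x]
      by (simp add: dist_real_def dist_norm norm_minus_commute abs_le_iff)
  qed fact
qed

section \<open>Derivatives and estimates at a point\<close>

lemma norm_matrix_vector_mult_le_entrywise:
  fixes M :: "real^'n^'m"
  assumes "\<And>i j. \<bar>M $ i $ j\<bar> \<le> e"
  shows "norm (M *v v) \<le> real CARD('m) * real CARD('n) * e * norm v"
  using onorm[OF matrix_vector_mul_bounded_linear, of M v]
    mult_right_mono[OF onorm_le_matrix_component[OF assms] norm_ge_zero[of v]]
  by linarith

lemma quadratic_form_eq_inner: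
  fixes M :: "real^'n^'n"
  shows "(\<Sum>i\<in>UNIV. \<Sum>j\<in>UNIV. M $ i $ j * \<xi> $ i * \<zeta> $ j) = \<xi> \<bullet> (M *v \<zeta>)"
  by (simp add: inner_vec_def matrix_vector_mult_def sum_distrib_left mult_ac)

lemma norm_matrix_vector_mult_le_if_bilinear_bound:
  fixes M :: "real^'n^'m"
  assumes "0 \<le> c" and "\<And>\<xi>. \<xi> \<bullet> (M *v \<zeta>) \<le> c * norm \<xi> * norm \<zeta>"
  shows "norm (M *v \<zeta>) \<le> c * norm \<zeta>"
proof (cases "M *v \<zeta> = 0")
  case False
  have "norm (M *v \<zeta>) * norm (M *v \<zeta>) \<le> norm (M *v \<zeta>) * (c * norm \<zeta>)"
    using assms(2)[of "M *v \<zeta>"] by (simp add: power2_norm_eq_inner[symmetric] power2_eq_square mult_ac)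
  then show ?thesis
    using False by simp
qed (use assms(1) in simp)

lemma inner_matrix_vector_mult_symmetric:
  fixes M :: "real^'n^'n"
  assumes "\<And>i j. M $ i $ j = M $ j $ i"
  shows "(M *v h) \<bullet> x = h \<bullet> (M *v x)"
proof -
  have "transpose M = M"
    using assms by (simp add: transpose_def vec_eq_iff)
  then have "x v* M = M *v x"
    by (metis transpose_matrix_vector)
  then show ?thesis
    by (metis dot_lmul_matrix inner_commute)
qed

lemma has_derivative_vec_lambda:
  fixes g :: "'n::finite \<Rightarrow> 'a::real_normed_vector \<Rightarrow> real"
  assumes "\<And>k. (g k has_derivative g' k) (at x)"
  shows "((\<lambda>y. \<chi> k. g k y) has_derivative (\<lambda>h. \<chi> k. g' k h)) (at x)"
proof -
  have "(\<lambda>y. \<chi> k. g k y) = (\<lambda>y. \<Sum>k\<in>UNIV. g k y *\<^sub>R axis k 1)"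
    and "(\<lambda>h. \<chi> k. g' k h) = (\<lambda>h. \<Sum>k\<in>UNIV. g' k h *\<^sub>R axis k 1)"
    by (auto simp: vec_eq_iff axis_def if_distrib cong: if_cong)
  then show ?thesis
    by (simp only:) (intro has_derivative_sum has_derivative_scaleR_left assms)
qed

lemma has_derivative_matrix_vector_mult_self:
  fixes A :: "real^'n \<Rightarrow> real^'n^'n"
  assumes "\<And>i j. ((\<lambda>y. A y $ i $ j) has_derivative DA i j) (at x)"
  shows "((\<lambda>y. A y *v y) has_derivative (\<lambda>h. A x *v h + (\<chi> i j. DA i j h) *v x)) (at x)"
proof -
  have "((\<lambda>y. \<chi> i. \<Sum>j\<in>UNIV. A y $ i $ j * y $ j) has_derivative
         (\<lambda>h. \<chi> i. \<Sum>j\<in>UNIV. A x $ i $ j * h $ j + DA i j h * x $ j)) (at x)"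
    by (intro has_derivative_vec_lambda has_derivative_sum has_derivative_mult assms
        bounded_linear_imp_has_derivative bounded_linear_vec_nth)
  moreover have "(\<lambda>h. \<chi> i. \<Sum>j\<in>UNIV. A x $ i $ j * h $ j + DA i j h * x $ j)
      = (\<lambda>h. A x *v h + (\<chi> i j. DA i j h) *v x)"
    by (auto simp: matrix_vector_mult_def vec_eq_iff sum.distrib)
  ultimately show ?thesis
    by (simp add: matrix_vector_mult_def)
qed

lemma has_derivative_mu_fun:
  fixes A :: "real^'n \<Rightarrow> real^'n^'n"
  assumes F: "((\<lambda>y. A y *v y) has_derivative F') (at x)" and "x \<noteq> 0"
  shows "(mu_fun A has_derivative (\<lambda>h.
           ((F' h \<bullet> x + (A x *v x) \<bullet> h) * (norm x)\<^sup>2 - ((A x *v x) \<bullet> x) * (2 * (x \<bullet> h))) / ((norm x)\<^sup>2)\<^sup>2))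
         (at x)"
proof -
  have "mu_fun A = (\<lambda>y. ((A y *v y) \<bullet> y) / (y \<bullet> y))"
    by (simp add: mu_fun_def fun_eq_iff power2_norm_eq_inner)
  moreover have "((\<lambda>y. ((A y *v y) \<bullet> y) / (y \<bullet> y)) has_derivative (\<lambda>h.
           ((F' h \<bullet> x + (A x *v x) \<bullet> h) * (x \<bullet> x) - ((A x *v x) \<bullet> x) * (2 * (x \<bullet> h))) / (x \<bullet> x)\<^sup>2))
         (at x)"
    using \<open>x \<noteq> 0\<close>
    by (auto intro!: derivative_eq_intros F simp: field_simps power2_eq_square inner_commute)
  ultimately show ?thesis
    by (simp add: power2_norm_eq_inner)
qed

lemma has_derivative_Z_fun:
  fixes A :: "real^'n \<Rightarrow> real^'n^'n"
  assumes F: "((\<lambda>y. A y *v y) has_derivative F') (at x)"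
    and \<mu>: "(mu_fun A has_derivative \<mu>') (at x)" and "mu_fun A x \<noteq> 0"
  shows "(Z_fun A has_derivative
           (\<lambda>h. (1 / mu_fun A x) *\<^sub>R F' h - (\<mu>' h / (mu_fun A x)\<^sup>2) *\<^sub>R (A x *v x))) (at x)"
  unfolding Z_fun_def using assms(3)
  by (auto intro!: derivative_eq_intros F \<mu> simp: field_simps power2_eq_square)


text \<open>\<open>M\<close> stands for \<open>A x\<close> and \<open>DM h\<close> for the matrix of derivatives of the coefficients
  at \<open>x\<close> in direction \<open>h\<close>; then \<open>F'\<close>, \<open>mu'\<close> and \<open>Z'\<close> are the derivatives at \<open>x\<close> of
  \<open>\<lambda>y. A y *v y\<close>, \<open>mu_fun A\<close> and \<open>Z_fun A\<close>.\<close>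

locale elliptic_near_identity =
  fixes lam \<eta> :: real and M :: "real^'n^'n" and DM :: "real^'n \<Rightarrow> real^'n^'n" and x :: "real^'n"
  assumes lam_pos: "0 < lam" and eta_nonneg: "0 \<le> \<eta>" and x_nonzero: "x \<noteq> 0"
    and symmetric: "\<And>i j. M $ i $ j = M $ j $ i"
    and bounded: "\<And>\<xi> \<zeta>. \<xi> \<bullet> (M *v \<zeta>) \<le> 1 / lam * norm \<xi> * norm \<zeta>"
    and coercive: "\<And>\<xi>. lam * (norm \<xi>)\<^sup>2 \<le> \<xi> \<bullet> (M *v \<xi>)"
    and near_identity: "\<And>i j. \<bar>(M - mat 1) $ i $ j\<bar> \<le> \<eta> * norm x"
    and DM_bound: "\<And>h i j. \<bar>DM h $ i $ j\<bar> \<le> \<eta> * norm h"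
begin

definition F' :: "real^'n \<Rightarrow> real^'n"
  where "F' h = M *v h + DM h *v x"

definition mu :: real
  where "mu = ((M *v x) \<bullet> x) / (norm x)\<^sup>2"

definition mu' :: "real^'n \<Rightarrow> real"
  where "mu' h = ((F' h \<bullet> x + (M *v x) \<bullet> h) * (norm x)\<^sup>2 - ((M *v x) \<bullet> x) * (2 * (x \<bullet> h))) / ((norm x)\<^sup>2)\<^sup>2"

definition Z' :: "real^'n \<Rightarrow> real^'n"
  where "Z' h = (1 / mu) *\<^sub>R F' h - (mu' h / mu\<^sup>2) *\<^sub>R (M *v x)"

lemma norm_M_minus_id_mult_le: "norm ((M - mat 1) *v h) \<le> real CARD('n)^2 * \<eta> * norm x * norm h"
  using norm_matrix_vector_mult_le_entrywise[OF near_identity, of h] by (simp add: power2_eq_square)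

lemma norm_DM_mult_le: "norm (DM h *v x) \<le> real CARD('n)^2 * \<eta> * norm x * norm h"
  using norm_matrix_vector_mult_le_entrywise[OF DM_bound, of h x] by (simp add: power2_eq_square mult_ac)

lemma norm_F'_sub_le: "norm (F' h - h) \<le> 2 * real CARD('n)^2 * \<eta> * norm x * norm h"
proof -
  have "F' h - h = (M - mat 1) *v h + DM h *v x"
    by (simp add: F'_def matrix_vector_mult_diff_rdistrib)
  then show ?thesis
    using norm_triangle_ineq[of "(M - mat 1) *v h" "DM h *v x"]
      norm_M_minus_id_mult_le[of h] norm_DM_mult_le[of h]
    by simp
qed

lemma abs_M_minus_id_mult_x_inner_le:
  "\<bar>((M - mat 1) *v x) \<bullet> h\<bar> \<le> real CARD('n)^2 * \<eta> * (norm x)\<^sup>2 * norm h"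
  using order_trans[OF Cauchy_Schwarz_ineq2 mult_right_mono[OF norm_M_minus_id_mult_le[of x] norm_ge_zero]]
  by (simp add: power2_eq_square mult_ac)

lemma norm_x_pos: "0 < norm x"
  using x_nonzero by simp

lemma mu_ge: "lam \<le> mu"
  using coercive[of x] norm_x_pos by (simp add: mu_def field_simps inner_commute)

lemma abs_mu_sub_1_le: "\<bar>mu - 1\<bar> \<le> real CARD('n)^2 * \<eta> * norm x"
proof -
  have "mu - 1 = (((M - mat 1) *v x) \<bullet> x) / (norm x)\<^sup>2"
    using norm_x_pos
    by (simp add: mu_def matrix_vector_mult_diff_rdistrib inner_diff_left power2_norm_eq_inner field_simps)
  then have "\<bar>mu - 1\<bar> = \<bar>((M - mat 1) *v x) \<bullet> x\<bar> / (norm x)\<^sup>2"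
    by (simp add: abs_div)
  also have "\<dots> \<le> real CARD('n)^2 * \<eta> * (norm x)\<^sup>2 * norm x / (norm x)\<^sup>2"
    by (intro divide_right_mono abs_M_minus_id_mult_x_inner_le) simp
  also have "\<dots> = real CARD('n)^2 * \<eta> * norm x"
    using norm_x_pos by simp
  finally show ?thesis .
qed

lemma norm_M_mult_x_le: "norm (M *v x) \<le> norm x / lam"
  using norm_matrix_vector_mult_le_if_bilinear_bound[of "1 / lam" M x] lam_pos bounded by simp

text \<open>Symmetry of \<open>M\<close> turns \<open>F' h \<bullet> x\<close> into \<open>(M *v x) \<bullet> h\<close> plus a \<open>DM\<close>-term; writing
  \<open>M *v x = x + (M - mat 1) *v x\<close>, everything cancels except terms carrying \<open>M - mat 1\<close> or \<open>DM\<close>.\<close>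

lemma mu'_eq:
  "mu' h = (2 * ((((M - mat 1) *v x) \<bullet> h) * (norm x)\<^sup>2) + ((DM h *v x) \<bullet> x) * (norm x)\<^sup>2
             - 2 * ((((M - mat 1) *v x) \<bullet> x) * (x \<bullet> h))) / ((norm x)\<^sup>2)\<^sup>2"
proof -
  define G where "G = (M - mat 1) *v x"
  have Mx: "M *v x = x + G"
    by (simp add: G_def matrix_vector_mult_diff_rdistrib)
  have "(M *v h) \<bullet> x = (M *v x) \<bullet> h"
    using inner_matrix_vector_mult_symmetric[OF symmetric, of h x] by (simp only: inner_commute)
  then have "F' h \<bullet> x = (M *v x) \<bullet> h + (DM h *v x) \<bullet> x"
    by (simp add: F'_def inner_add_left)
  then show ?thesis
    unfolding mu'_def G_def[symmetric]
    by (simp add: Mx inner_add_left power2_norm_eq_inner algebra_simps inner_commute)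
qed

lemma abs_mu'_le: "\<bar>mu' h\<bar> \<le> 5 * real CARD('n)^2 * \<eta> * norm h"
proof -
  define G where "G = (M - mat 1) *v x"
  define P where "P = (DM h *v x) \<bullet> x"
  define r2 where "r2 = (norm x)\<^sup>2"
  define B where "B = real CARD('n)^2 * \<eta> * norm h * r2 * r2"
  have "r2 > 0"
    using norm_x_pos by (simp add: r2_def)
  have "\<bar>(G \<bullet> h) * r2\<bar> \<le> B"
    using mult_right_mono[OF abs_M_minus_id_mult_x_inner_le[of h], of r2] \<open>r2 > 0\<close>
    by (simp add: abs_mult G_def B_def r2_def mult_ac)
  moreover have "\<bar>P * r2\<bar> \<le> B"
  proof -
    have "\<bar>P\<bar> \<le> norm (DM h *v x) * norm x"
      unfolding P_def by (rule Cauchy_Schwarz_ineq2)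
    also have "\<dots> \<le> real CARD('n)^2 * \<eta> * norm h * r2"
      using mult_right_mono[OF norm_DM_mult_le[of h] norm_ge_zero[of x]]
      by (simp add: r2_def power2_eq_square mult_ac)
    finally show ?thesis
      using \<open>r2 > 0\<close> by (simp add: abs_mult B_def mult_right_mono)
  qed
  moreover have "\<bar>(G \<bullet> x) * (x \<bullet> h)\<bar> \<le> (real CARD('n)^2 * \<eta> * r2 * norm x) * (norm x * norm h)"
    unfolding abs_mult
    using abs_M_minus_id_mult_x_inner_le[of x] Cauchy_Schwarz_ineq2[of x h] eta_nonneg
    by (intro mult_mono) (auto simp: G_def r2_def)
  moreover have "(real CARD('n)^2 * \<eta> * r2 * norm x) * (norm x * norm h) = B"
    by (simp add: B_def r2_def power2_eq_square)
  ultimately have "\<bar>2 * ((G \<bullet> h) * r2) + P * r2 - 2 * ((G \<bullet> x) * (x \<bullet> h))\<bar> \<le> 5 * B"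
    by linarith
  moreover have "mu' h = (2 * ((G \<bullet> h) * r2) + P * r2 - 2 * ((G \<bullet> x) * (x \<bullet> h))) / r2\<^sup>2"
    unfolding G_def P_def r2_def by (rule mu'_eq)
  ultimately have "\<bar>mu' h\<bar> \<le> 5 * B / r2\<^sup>2"
    using \<open>r2 > 0\<close> by (simp add: abs_div divide_right_mono)
  also have "\<dots> = 5 * real CARD('n)^2 * \<eta> * norm h"
    using \<open>r2 > 0\<close> by (simp add: B_def power2_eq_square)
  finally show ?thesis .
qed

lemma mu_pos: "0 < mu"
  using lam_pos mu_ge by linarith

lemma norm_Z'_sub_le:
  "norm (Z' h - h) \<le> real CARD('n)^2 * (3 / lam + 5 / lam ^ 3) * \<eta> * norm x * norm h"
proof -
  define E where "E = real CARD('n)^2 * \<eta> * norm x * norm h"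
  have split: "Z' h - h = (1 / mu) *\<^sub>R (F' h - h - (mu - 1) *\<^sub>R h) - (mu' h / mu\<^sup>2) *\<^sub>R (M *v x)"
    using mu_pos by (simp add: Z'_def algebra_simps)
  have first: "norm ((1 / mu) *\<^sub>R (F' h - h - (mu - 1) *\<^sub>R h)) \<le> 3 * E / lam"
  proof -
    have "norm (F' h - h - (mu - 1) *\<^sub>R h) \<le> norm (F' h - h) + \<bar>mu - 1\<bar> * norm h"
      using norm_triangle_ineq4[of "F' h - h" "(mu - 1) *\<^sub>R h"] by simp
    also have "\<dots> \<le> 3 * E"
      using norm_F'_sub_le[of h] mult_right_mono[OF abs_mu_sub_1_le norm_ge_zero[of h]]
      unfolding E_def by linarith
    finally have "norm (F' h - h - (mu - 1) *\<^sub>R h) / mu \<le> 3 * E / mu"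
      using mu_pos by (simp add: divide_right_mono)
    also have "\<dots> \<le> 3 * E / lam"
      using lam_pos mu_ge eta_nonneg by (intro divide_left_mono) (auto simp: E_def)
    finally show ?thesis
      using mu_pos by simp
  qed
  have second: "norm ((mu' h / mu\<^sup>2) *\<^sub>R (M *v x)) \<le> 5 * E / lam ^ 3"
  proof -
    have "\<bar>mu' h\<bar> / mu\<^sup>2 \<le> 5 * real CARD('n)^2 * \<eta> * norm h / lam\<^sup>2"
      using abs_mu'_le[of h] lam_pos mu_ge eta_nonneg
      by (intro frac_le power_mono) auto
    then have "\<bar>mu' h\<bar> / mu\<^sup>2 * norm (M *v x) \<le> 5 * real CARD('n)^2 * \<eta> * norm h / lam\<^sup>2 * (norm x / lam)"
      using norm_M_mult_x_le lam_pos eta_nonneg by (intro mult_mono) auto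
    then show ?thesis
      by (simp add: E_def abs_div power3_eq_cube power2_eq_square mult_ac)
  qed
  have "norm (Z' h - h) \<le> 3 * E / lam + 5 * E / lam ^ 3"
    unfolding split using first second
      norm_triangle_ineq4[of "(1 / mu) *\<^sub>R (F' h - h - (mu - 1) *\<^sub>R h)" "(mu' h / mu\<^sup>2) *\<^sub>R (M *v x)"]
    by linarith
  then show ?thesis
    by (simp add: E_def algebra_simps add_divide_distrib)
qed

lemma abs_trace_F'_div_mu_sub_le:
  "\<bar>(\<Sum>i\<in>UNIV. F' (axis i 1) $ i) / mu - real CARD('n)\<bar>
     \<le> 3 * real CARD('n) * real CARD('n)^2 / lam * \<eta> * norm x"
proof -
  define E where "E = real CARD('n)^2 * \<eta> * norm x"
  define t where "t = (\<Sum>i\<in>UNIV. (F' (axis i 1) - axis i 1) $ i)"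
  have "(\<Sum>i\<in>UNIV. F' (axis i 1) $ i) = real CARD('n) + t"
    by (simp add: t_def sum_subtractf axis_def)
  then have "(\<Sum>i\<in>UNIV. F' (axis i 1) $ i) / mu - real CARD('n) = (t + real CARD('n) * (1 - mu)) / mu"
    using mu_pos by (simp add: field_simps)
  moreover have "\<bar>t\<bar> \<le> real CARD('n) * (2 * E)"
  proof -
    have "\<bar>t\<bar> \<le> (\<Sum>i\<in>UNIV. \<bar>(F' (axis i 1) - axis i 1) $ i\<bar>)"
      unfolding t_def by (rule sum_abs)
    also have "\<dots> \<le> (\<Sum>i\<in>(UNIV::'n set). 2 * E)"
    proof (rule sum_mono)
      fix i :: 'n
      have "\<bar>(F' (axis i 1) - axis i 1) $ i\<bar> \<le> norm (F' (axis i 1) - axis i 1)"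
        by (rule component_le_norm_cart)
      also have "\<dots> \<le> 2 * E"
        using norm_F'_sub_le[of "axis i 1"] by (simp add: E_def)
      finally show "\<bar>(F' (axis i 1) - axis i 1) $ i\<bar> \<le> 2 * E" .
    qed
    finally show ?thesis by simp
  qed
  moreover have "\<bar>real CARD('n) * (1 - mu)\<bar> \<le> real CARD('n) * E"
    using abs_mu_sub_1_le by (simp add: abs_mult E_def abs_minus_commute)
  ultimately have "\<bar>(\<Sum>i\<in>UNIV. F' (axis i 1) $ i) / mu - real CARD('n)\<bar> \<le> 3 * real CARD('n) * E / mu"
    using mu_pos by (simp add: abs_div divide_right_mono)
  also have "\<dots> \<le> 3 * real CARD('n) * E / lam"
    using lam_pos mu_ge eta_nonneg by (intro divide_left_mono) (auto simp: E_def)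
  finally show ?thesis
    by (simp add: E_def)
qed


lemma has_derivative_F':
  fixes A :: "real^'n \<Rightarrow> real^'n^'n"
  assumes "A x = M" and "\<And>i j. ((\<lambda>y. A y $ i $ j) has_derivative (\<lambda>h. DM h $ i $ j)) (at x)"
  shows "((\<lambda>y. A y *v y) has_derivative F') (at x)"
  using has_derivative_matrix_vector_mult_self[OF assms(2)] by (simp add: assms(1) F'_def[abs_def])

lemma has_derivative_Z':
  fixes A :: "real^'n \<Rightarrow> real^'n^'n"
  assumes "A x = M" and "\<And>i j. ((\<lambda>y. A y $ i $ j) has_derivative (\<lambda>h. DM h $ i $ j)) (at x)"
  shows "(Z_fun A has_derivative Z') (at x)"
proof -
  note dF = has_derivative_F'[OF assms]
  have mu: "mu_fun A x = mu"
    by (simp add: mu_fun_def mu_def assms(1))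
  have "(mu_fun A has_derivative mu') (at x)"
    using has_derivative_mu_fun[OF dF x_nonzero] by (simp add: assms(1) mu'_def[abs_def])
  then show ?thesis
    using has_derivative_Z_fun[OF dF] mu_pos by (simp add: mu assms(1) Z'_def[abs_def])
qed

lemma derivative_estimates:
  fixes A :: "real^'n \<Rightarrow> real^'n^'n"
  assumes Ax: "A x = M"
    and der: "\<And>i j. ((\<lambda>y. A y $ i $ j) has_derivative (\<lambda>h. DM h $ i $ j)) (at x)"
    and "norm x \<le> r"
  shows "(\<lambda>y. A y *v y) differentiable (at x)
    \<and> Z_fun A differentiable (at x)
    \<and> \<bar>divergence (\<lambda>y. A y *v y) x / mu_fun A x - real CARD('n)\<bar>
        \<le> 3 * real CARD('n) * real CARD('n)^2 / lam * \<eta> * r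
    \<and> (\<forall>i k. \<bar>(if i = k then 1 else 0) - vpartial (Z_fun A) i k x\<bar>
        \<le> real CARD('n)^2 * (3 / lam + 5 / lam ^ 3) * \<eta> * r)
    \<and> \<bar>divergence (Z_fun A) x - real CARD('n)\<bar>
        \<le> real CARD('n) * (real CARD('n)^2 * (3 / lam + 5 / lam ^ 3)) * \<eta> * r"
proof -
  define c2 where "c2 = real CARD('n)^2 * (3 / lam + 5 / lam ^ 3)"
  note dF = has_derivative_F'[OF Ax der] and dZ = has_derivative_Z'[OF Ax der]
  have scale: "c * \<eta> * norm x \<le> c * \<eta> * r" if "0 \<le> c" for c
    using \<open>norm x \<le> r\<close> that eta_nonneg by (simp add: mult_left_mono)
  have partial: "\<bar>(if i = k then 1 else 0) - vpartial (Z_fun A) i k x\<bar> \<le> c2 * \<eta> * r" for i k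
  proof -
    have "\<bar>(if i = k then 1 else 0) - vpartial (Z_fun A) i k x\<bar> = \<bar>(Z' (axis i 1) - axis i 1) $ k\<bar>"
      by (simp add: vpartial_def frechet_derivative_at[OF dZ, symmetric] axis_def abs_minus_commute)
    also have "\<dots> \<le> norm (Z' (axis i 1) - axis i 1)"
      by (rule component_le_norm_cart)
    also have "\<dots> \<le> c2 * \<eta> * norm x"
      using norm_Z'_sub_le[of "axis i 1"] by (simp add: c2_def)
    also have "\<dots> \<le> c2 * \<eta> * r"
      using lam_pos by (intro scale) (simp add: c2_def)
    finally show ?thesis .
  qed
  have "\<bar>divergence (Z_fun A) x - real CARD('n)\<bar> \<le> (\<Sum>i\<in>UNIV. \<bar>1 - vpartial (Z_fun A) i i x\<bar>)"
    unfolding divergence_def using sum_abs[of "\<lambda>i. 1 - vpartial (Z_fun A) i i x" UNIV]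
    by (simp add: sum_subtractf abs_minus_commute)
  also have "\<dots> \<le> (\<Sum>i\<in>(UNIV::'n set). c2 * \<eta> * r)"
    using partial by (intro sum_mono) (metis (full_types))
  finally have divZ: "\<bar>divergence (Z_fun A) x - real CARD('n)\<bar> \<le> real CARD('n) * c2 * \<eta> * r"
    by (simp add: mult_ac)
  have "divergence (\<lambda>y. A y *v y) x = (\<Sum>i\<in>UNIV. F' (axis i 1) $ i)"
    by (simp add: divergence_def vpartial_def frechet_derivative_at[OF dF, symmetric])
  then have "\<bar>divergence (\<lambda>y. A y *v y) x / mu_fun A x - real CARD('n)\<bar>
      \<le> 3 * real CARD('n) * real CARD('n)^2 / lam * \<eta> * r"
    using abs_trace_F'_div_mu_sub_le scale[of "3 * real CARD('n) * real CARD('n)^2 / lam"] lam_pos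
    by (simp add: mu_fun_def mu_def Ax)
  with dF dZ partial divZ show ?thesis
    unfolding c2_def differentiable_def by blast
qed

end

lemma AE_divergence_estimates:
  fixes A :: "real^'n \<Rightarrow> real^'n^'n"
  assumes "0 < lam" and "0 \<le> \<eta>"
    and lip: "\<forall>i j. \<exists>L. L-lipschitz_on UNIV (\<lambda>x. A x $ i $ j)"
    and sym: "\<forall>x i j. A x $ i $ j = A x $ j $ i"
    and up: "\<forall>x \<xi> \<zeta>. (\<Sum>i\<in>UNIV. \<Sum>j\<in>UNIV. A x $ i $ j * \<xi> $ i * \<zeta> $ j) \<le> (1 / lam) * norm \<xi> * norm \<zeta>"
    and low: "\<forall>x \<xi>. (\<Sum>i\<in>UNIV. \<Sum>j\<in>UNIV. A x $ i $ j * \<xi> $ i * \<xi> $ j) \<ge> lam * (norm \<xi>)^2"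
    and ae: "AE x in lebesgue. \<forall>i j. \<exists>D. ((\<lambda>y. A y $ i $ j) has_derivative D) (at x)
                                       \<and> (\<forall>h. \<bar>D h\<bar> \<le> \<eta> * norm h)"
    and "A 0 = mat 1"
  shows "AE x in lebesgue. x \<in> ball 0 r \<longrightarrow>
    (\<lambda>y. A y *v y) differentiable (at x)
    \<and> Z_fun A differentiable (at x)
    \<and> \<bar>divergence (\<lambda>y. A y *v y) x / mu_fun A x - real CARD('n)\<bar>
        \<le> 3 * real CARD('n) * real CARD('n)^2 / lam * \<eta> * r
    \<and> (\<forall>i k. \<bar>(if i = k then 1 else 0) - vpartial (Z_fun A) i k x\<bar>
        \<le> real CARD('n)^2 * (3 / lam + 5 / lam ^ 3) * \<eta> * r)
    \<and> \<bar>divergence (Z_fun A) x - real CARD('n)\<bar>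
        \<le> real CARD('n) * (real CARD('n)^2 * (3 / lam + 5 / lam ^ 3)) * \<eta> * r"
proof -
  have "\<eta>-lipschitz_on UNIV (\<lambda>x. A x $ i $ j)" for i j
  proof -
    obtain L where "L-lipschitz_on UNIV (\<lambda>x. A x $ i $ j)"
      using lip by blast
    moreover have "AE x in lebesgue. \<exists>D. ((\<lambda>y. A y $ i $ j) has_derivative D) (at x)
        \<and> (\<forall>h. \<bar>D h\<bar> \<le> \<eta> * norm h)"
      using ae by eventually_elim blast
    ultimately show ?thesis
      using \<open>0 \<le> \<eta>\<close> by (rule lipschitz_on_UNIV_if_AE_derivative_bound)
  qed
  then have near_identity: "\<bar>(A x - mat 1) $ i $ j\<bar> \<le> \<eta> * norm x" for x i j
    using lipschitz_on_normD[of \<eta> UNIV "\<lambda>x. A x $ i $ j" x 0] \<open>A 0 = mat 1\<close> by simp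
  \<comment> \<open>At the origin \<open>mu_fun\<close> and \<open>Z_fun\<close> are junk values (division by \<open>norm 0\<close>).\<close>
  have "AE x in lebesgue. x \<noteq> 0"
    unfolding eventually_ae_filter_negligible by (intro exI[of _ "{0}"]) auto
  with ae show ?thesis
  proof eventually_elim
    case (elim x)
    then obtain DA where DA: "\<And>i j. ((\<lambda>y. A y $ i $ j) has_derivative DA i j) (at x)"
      and DA_bound: "\<And>i j h. \<bar>DA i j h\<bar> \<le> \<eta> * norm h"
      by metis
    interpret elliptic_near_identity lam \<eta> "A x" "\<lambda>h. \<chi> i j. DA i j h" x
      using assms(1,2) elim(2) sym near_identity DA_bound up low
      by unfold_locales (auto simp: quadratic_form_eq_inner)
    show ?case
      using derivative_estimates[of A r] DA by (auto simp: less_imp_le)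
  qed
qed

theorem lemma4p1:
  fixes lam :: real
  assumes "CARD('n) \<ge> 2" and "lam > 0"
  shows "\<exists>c1 c2 c3. c1 > 0 \<and> c2 > 0 \<and> c3 > 0 \<and>
    (\<forall>(A :: real^'n \<Rightarrow> real^'n^'n) (eta :: real).
      eta > 0
      \<and> (\<forall>i j. \<exists>L. L-lipschitz_on UNIV (\<lambda>x. A x $ i $ j))
      \<and> (\<forall>x i j. A x $ i $ j = A x $ j $ i)
      \<and> (\<forall>x \<xi> \<zeta>. (\<Sum>i\<in>UNIV. \<Sum>j\<in>UNIV. A x $ i $ j * \<xi> $ i * \<zeta> $ j) \<le> (1 / lam) * norm \<xi> * norm \<zeta>)
      \<and> (\<forall>x \<xi>. (\<Sum>i\<in>UNIV. \<Sum>j\<in>UNIV. A x $ i $ j * \<xi> $ i * \<xi> $ j) \<ge> lam * (norm \<xi>)^2)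
      \<and> (AE x in lebesgue. \<forall>i j. \<exists>D. ((\<lambda>y. A y $ i $ j) has_derivative D) (at x)
                                       \<and> (\<forall>h. \<bar>D h\<bar> \<le> eta * norm h))
      \<and> A 0 = mat 1
      \<longrightarrow> (\<forall>r > 0. AE x in lebesgue. x \<in> ball 0 r \<longrightarrow>
            (\<lambda>y. A y *v y) differentiable (at x)
            \<and> Z_fun A differentiable (at x)
            \<and> \<bar>divergence (\<lambda>y. A y *v y) x / mu_fun A x - real CARD('n)\<bar> \<le> c1 * eta * r
            \<and> (\<forall>i k. \<bar>(if i = k then 1 else 0) - vpartial (Z_fun A) i k x\<bar> \<le> c2 * eta * r)
            \<and> \<bar>divergence (Z_fun A) x - real CARD('n)\<bar> \<le> c3 * eta * r))"
proof -
  let ?c1 = "3 * real CARD('n) * real CARD('n)^2 / lam"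
  let ?c2 = "real CARD('n)^2 * (3 / lam + 5 / lam ^ 3)"
  have "0 < 3 / lam + 5 / lam ^ 3"
    using \<open>lam > 0\<close> by (intro add_pos_pos) simp_all
  then have pos: "0 < ?c1" "0 < ?c2" "0 < real CARD('n) * ?c2"
    using \<open>lam > 0\<close> by simp_all
  show ?thesis
    by (intro exI[of _ ?c1] exI[of _ ?c2] exI[of _ "real CARD('n) * ?c2"] conjI allI impI pos, elim conjE)
      (rule AE_divergence_estimates[OF \<open>lam > 0\<close> less_imp_le]; assumption)
qed

end
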